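(* Let $\mathcal H$ be a well-structured preconditioner set. The map $X\mapsto\operatorname{Tr}[P_{\mathcal H}(X)]$ is concave on $\mathcal S^d_{++}$.
   Context: $\mathcal S^d_+$ (resp. $\mathcal S^d_{++}$) denotes the set of real symmetric positive semidefinite (resp. positive definite) $d\times d$ matrices; $\langle A,B\rangle=\operatorname{Tr}(A^\top B)$. A set $\mathcal H\subseteq\mathcal S_+^d$ is a well-structured preconditioner set if $\mathcal H=\mathcal S_+^d\cap\mathcal K$ for some set $\mathcal K$ of real $d\times d$ matrices that is closed under scalar multiplication, matrix addition and matrix multiplication and contains the identity $I_d$. For $M\in\mathcal S^d_{++}$, $P_{\mathcal H}(M):=\arg\min_{H\in\mathcal H\cap\mathcal S^d_{++}}\langle M,H^{-1}\rangle+\operatorname{Tr}(H)$ (the minimizer exists and is unique). *)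

theory Defs
  imports "HOL-Analysis.Analysis"
begin

definition psd_mat :: "real^'n^'n \<Rightarrow> bool" where
  "psd_mat A \<longleftrightarrow> transpose A = A \<and> (\<forall>x. 0 \<le> x \<bullet> (A *v x))"

definition pd_mat :: "real^'n^'n \<Rightarrow> bool" where
  "pd_mat A \<longleftrightarrow> transpose A = A \<and> (\<forall>x. x \<noteq> 0 \<longrightarrow> 0 < x \<bullet> (A *v x))"

definition frob_inner :: "real^'n^'n \<Rightarrow> real^'n^'n \<Rightarrow> real" where
  "frob_inner A B = trace (transpose A ** B)"

definition well_structured :: "(real^'n^'n) set \<Rightarrow> bool" where
  "well_structured H \<longleftrightarrow>
     (\<exists>K :: (real^'n^'n) set.
        (\<forall>c A. A \<in> K \<longrightarrow> c *\<^sub>R A \<in> K) \<and>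
        (\<forall>A B. A \<in> K \<longrightarrow> B \<in> K \<longrightarrow> A + B \<in> K) \<and>
        (\<forall>A B. A \<in> K \<longrightarrow> B \<in> K \<longrightarrow> A ** B \<in> K) \<and>
        mat 1 \<in> K \<and>
        H = {A. psd_mat A} \<inter> K)"

definition precond :: "(real^'n^'n) set \<Rightarrow> real^'n^'n \<Rightarrow> real^'n^'n" where
  "precond H M = (THE P. P \<in> H \<and> pd_mat P \<and>
      (\<forall>Q. Q \<in> H \<and> pd_mat Q \<longrightarrow>
         frob_inner M (matrix_inv P) + trace P \<le> frob_inner M (matrix_inv Q) + trace Q))"

end

theory Submission
  imports Defs
begin

text \<open>
  \<open>P(X)\<close> minimises \<open>f(X, Q) = X \<bullet> Q\<inverse> + trace Q\<close> over the positive definite part of \<open>H\<close>,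
  a convex cone. Comparing \<open>P(X)\<close> with its multiples \<open>t P(X)\<close> forces \<open>X \<bullet> P(X)\<inverse> = trace P(X)\<close>,
  so \<open>trace P(X) = min\<^sub>Q f(X, Q) / 2\<close> is a pointwise minimum of functions affine in \<open>X\<close>,
  hence concave.

  Existence and uniqueness of the minimiser rest on the minorant \<open>X \<bullet> (2W - WQW) + trace Q\<close>
  of \<open>f(X, Q)\<close>: it is affine and continuous in \<open>Q\<close>, falls short of \<open>f(X, Q)\<close> by
  \<open>X \<bullet> (Q\<inverse> - W) Q (Q\<inverse> - W) \<ge> 0\<close>, and touches it exactly at \<open>W = Q\<inverse>\<close>. This gives lower
  semicontinuity of \<open>f(X, -)\<close> (existence, via a minimising sequence whose traces are bounded)
  and its strict convexity (uniqueness). The nonnegativity of \<open>A \<bullet> B\<close> for positive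
  semidefinite \<open>A, B\<close> behind both comes from writing \<open>B\<close> as a sum of rank-one matrices
  by repeated Schur complements.
\<close>

section \<open>Quadratic forms and rank-one matrices\<close>

definition outer :: "real^'n \<Rightarrow> real^'n^'n" where
  "outer u = (\<chi> i j. u$i * u$j)"

lemma frob_inner_eq_inner: "frob_inner A B = A \<bullet> (B::real^'n^'n)"
proof -
  have "frob_inner A B = (\<Sum>j\<in>UNIV. \<Sum>i\<in>UNIV. A$i$j * B$i$j)"
    unfolding frob_inner_def trace_def matrix_matrix_mult_def transpose_def by simp
  also have "\<dots> = A \<bullet> B"
    by (subst sum.swap) (simp add: inner_vec_def)
  finally show ?thesis .
qed

lemma inner_quad_form: "x \<bullet> ((A::real^'n^'n) *v y) = (\<Sum>i\<in>UNIV. \<Sum>j\<in>UNIV. x$i * A$i$j * y$j)"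
  by (simp add: inner_vec_def matrix_vector_mult_def sum_distrib_left mult.assoc)

lemma inner_outer: "(A::real^'n^'n) \<bullet> outer u = u \<bullet> (A *v u)"
  unfolding inner_quad_form by (simp add: inner_vec_def outer_def sum_distrib_left algebra_simps)

lemma outer_quad_form: "x \<bullet> (outer u *v x) = (u \<bullet> x)\<^sup>2"
  unfolding inner_quad_form
  by (simp add: outer_def inner_vec_def power2_eq_square sum_product algebra_simps)

lemma outer_scaleR: "outer (c *\<^sub>R u) = c\<^sup>2 *\<^sub>R outer u"
  by (simp add: outer_def vec_eq_iff power2_eq_square)

lemma norm_outer: "norm (outer v) = v \<bullet> v"
  using inner_outer[of "outer v" v] outer_quad_form[of v v]
  by (simp add: norm_eq_sqrt_inner)

lemma trace_outer: "trace (outer v) = v \<bullet> v"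
  by (simp add: trace_def outer_def inner_vec_def)

lemma trace_scaleR: "trace (c *\<^sub>R (A::real^'n^'n)) = c * trace A"
  by (simp add: trace_def sum_distrib_left)

lemma symmetric_entry: "transpose A = A \<Longrightarrow> A$i$j = A$j$i"
  by (metis transpose_def vec_lambda_beta)

lemma symmetric_inner_swap:
  assumes "transpose B = (B::real^'n^'n)"
  shows "a \<bullet> (B *v b) = b \<bullet> (B *v a)"
  by (metis assms dot_lmul_matrix inner_commute transpose_matrix_vector)

lemma inner_axis_matrix_axis: "axis i 1 \<bullet> ((B::real^'n^'n) *v axis j 1) = B$i$j"
  by (simp add: matrix_vector_mult_basis inner_axis' column_def)

lemma scaleR_matrix_vector_mult: "(c *\<^sub>R (M::real^'n^'n)) *v x = c *\<^sub>R (M *v x)"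
  by (simp add: scaleR_matrix_vector_assoc)

lemma matrix_diff_ldistrib: "(A::real^'n^'n) ** (B - C) = A ** B - A ** C"
  by (simp add: vec_eq_iff matrix_matrix_mult_def sum_subtractf algebra_simps)

lemma matrix_add_rdistrib: "((A::real^'n^'n) + B) ** C = A ** C + B ** C"
  by (simp add: vec_eq_iff matrix_matrix_mult_def sum.distrib algebra_simps)

lemma matrix_diff_rdistrib: "((A::real^'n^'n) - B) ** C = A ** C - B ** C"
  by (simp add: vec_eq_iff matrix_matrix_mult_def sum_subtractf algebra_simps)

lemma sandwich_quad_form:
  assumes "transpose R = (R::real^'n^'n)"
  shows "x \<bullet> ((R ** Q ** R) *v x) = (R *v x) \<bullet> (Q *v (R *v x))"
  by (metis assms matrix_vector_mul_assoc symmetric_inner_swap inner_commute)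

lemma outer_sandwich: "outer u ** (Q::real^'n^'n) ** outer u = (u \<bullet> (Q *v u)) *\<^sub>R outer u"
proof -
  have entry: "(outer u ** Q ** outer u) $ i $ j = (u \<bullet> (Q *v u)) * (u$i * u$j)" for i j
  proof -
    have "(outer u ** Q ** outer u) $ i $ j
        = (\<Sum>l\<in>UNIV. \<Sum>m\<in>UNIV. u$m * Q$m$l * u$l) * (u$i * u$j)"
      by (simp add: matrix_matrix_mult_def outer_def sum_distrib_left sum_distrib_right algebra_simps)
    also have "(\<Sum>l\<in>UNIV. \<Sum>m\<in>UNIV. u$m * Q$m$l * u$l) = u \<bullet> (Q *v u)"
      unfolding inner_quad_form by (rule sum.swap)
    finally show ?thesis .
  qed
  then show ?thesis
    by (intro vec_eq_iff[THEN iffD2] allI) (simp only: entry vector_scaleR_component, simp add: outer_def)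
qed

lemma linear_trace: "linear (trace :: real^'n^'n \<Rightarrow> real)"
  by (rule linearI) (simp_all add: trace_add trace_scaleR)

lemma linear_sandwich: "linear (\<lambda>Q::real^'n^'n. W ** Q ** W)"
  by (rule linearI)
    (simp_all add: matrix_add_ldistrib matrix_add_rdistrib matrix_scalar_ac scalar_matrix_assoc[symmetric])

section \<open>Positive definite and semidefinite matrices\<close>

lemma pd_imp_psd: "pd_mat A \<Longrightarrow> psd_mat A"
  unfolding pd_mat_def psd_mat_def by (metis inner_zero_left order_refl less_imp_le)

lemma psd_symmetric: "psd_mat A \<Longrightarrow> transpose A = A"
  unfolding psd_mat_def by simp

lemma psd_quad_nonneg: "psd_mat A \<Longrightarrow> 0 \<le> x \<bullet> (A *v x)"
  unfolding psd_mat_def by simp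

lemma psd_diag_nonneg: "psd_mat B \<Longrightarrow> 0 \<le> B$k$k"
  by (metis inner_axis_matrix_axis psd_quad_nonneg)

lemma psd_scaleR:
  assumes "psd_mat (A::real^'n^'n)" and "0 \<le> t"
  shows "psd_mat (t *\<^sub>R A)"
  using assms unfolding psd_mat_def by (simp add: transpose_scalar scaleR_matrix_vector_mult)

lemma pd_scaleR:
  assumes "pd_mat (A::real^'n^'n)" and "0 < t"
  shows "pd_mat (t *\<^sub>R A)"
  using assms unfolding pd_mat_def by (simp add: transpose_scalar scaleR_matrix_vector_mult)

lemma pd_convex_comb:
  fixes A B :: "real^'n^'n"
  assumes A: "pd_mat A" and B: "pd_mat B" and "0 \<le> u" "0 \<le> v" "u + v = 1"
  shows "pd_mat (u *\<^sub>R A + v *\<^sub>R B)"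
  unfolding pd_mat_def
proof (intro conjI allI impI)
  show "transpose (u *\<^sub>R A + v *\<^sub>R B) = u *\<^sub>R A + v *\<^sub>R B"
    using A B by (simp add: pd_mat_def vec_eq_iff transpose_def)
  fix x :: "real^'n" assume "x \<noteq> 0"
  then have a: "0 < x \<bullet> (A *v x)" and b: "0 < x \<bullet> (B *v x)"
    using A B unfolding pd_mat_def by auto
  have "x \<bullet> ((u *\<^sub>R A + v *\<^sub>R B) *v x) = u * (x \<bullet> (A *v x)) + v * (x \<bullet> (B *v x))"
    by (simp add: matrix_vector_mult_add_rdistrib scaleR_matrix_vector_mult inner_add_right)
  also have "\<dots> > 0"
    using a b assms(3-5) by (cases "u = 0") (auto intro: add_pos_nonneg)
  finally show "0 < x \<bullet> ((u *\<^sub>R A + v *\<^sub>R B) *v x)" .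
qed

lemma convex_pd: "convex {A::real^'n^'n. pd_mat A}"
  by (auto intro: convexI pd_convex_comb)

lemma subspace_symmetric: "subspace {A::real^'n^'n. transpose A = A}"
  by (simp add: subspace_def vec_eq_iff transpose_def)

lemma psd_set_eq: "{A::real^'n^'n. psd_mat A} = {A. transpose A = A} \<inter> (\<Inter>x. {A. outer x \<bullet> A \<ge> 0})"
  by (auto simp: psd_mat_def inner_outer inner_commute)

lemma convex_psd: "convex {A::real^'n^'n. psd_mat A}"
  unfolding psd_set_eq
  by (intro convex_Int subspace_imp_convex subspace_symmetric convex_INT ballI convex_halfspace_ge)

lemma closed_psd: "closed {A::real^'n^'n. psd_mat A}"
  unfolding psd_set_eq
  by (intro closed_Int closed_subspace subspace_symmetric closed_INT ballI closed_halfspace_ge)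

lemma psd_sandwich:
  assumes R: "transpose R = (R::real^'n^'n)" and Q: "psd_mat Q"
  shows "psd_mat (R ** Q ** R)"
  using Q unfolding psd_mat_def
  by (simp add: matrix_transpose_mul R matrix_mul_assoc sandwich_quad_form[OF R])

lemma psd_zero_diag_imp_zero_row:
  assumes B: "psd_mat B" and Bkk: "B$k$k = 0"
  shows "B$k$j = 0"
proof (rule ccontr)
  assume ne: "B$k$j \<noteq> 0"
  define t where "t = - (B$j$j + 1) / (2 * B$k$j)"
  let ?x = "t *\<^sub>R axis k 1 + axis j (1::real)"
  have "?x \<bullet> (B *v ?x) = t\<^sup>2 * B$k$k + 2 * t * B$k$j + B$j$j"
    using symmetric_entry[OF psd_symmetric[OF B], of j k]
    by (simp add: algebra_simps inner_axis_matrix_axis power2_eq_square)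
  also have "\<dots> = -1"
    using ne Bkk by (simp add: t_def field_simps)
  finally show False
    using psd_quad_nonneg[OF B, of ?x] by simp
qed

lemma matrix_inv_mult:
  assumes "invertible (A::real^'n^'n)"
  shows "A ** matrix_inv A = mat 1" and "matrix_inv A ** A = mat 1"
proof -
  have "\<exists>A'. A ** A' = mat 1 \<and> A' ** A = mat 1" using assms unfolding invertible_def .
  then have "A ** matrix_inv A = mat 1 \<and> matrix_inv A ** A = mat 1"
    unfolding matrix_inv_def by (rule someI_ex)
  then show "A ** matrix_inv A = mat 1" and "matrix_inv A ** A = mat 1" by auto
qed

lemma matrix_inv_unique:
  assumes "(A::real^'n^'n) ** B = mat 1"
  shows "matrix_inv A = B"
proof -
  have "invertible A" using assms invertible_right_inverse by blast
  then have "matrix_inv A = matrix_inv A ** (A ** B)" by (simp add: assms)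
  also have "\<dots> = B" by (simp add: matrix_mul_assoc matrix_inv_mult(2)[OF \<open>invertible A\<close>])
  finally show ?thesis .
qed

lemma matrix_inv_matrix_inv:
  assumes "invertible (A::real^'n^'n)"
  shows "matrix_inv (matrix_inv A) = A"
  by (rule matrix_inv_unique) (rule matrix_inv_mult(2)[OF assms])

lemma matrix_inv_scaleR:
  assumes "invertible (A::real^'n^'n)" and "t \<noteq> 0"
  shows "matrix_inv (t *\<^sub>R A) = (1 / t) *\<^sub>R matrix_inv A"
  using assms by (intro matrix_inv_unique)
    (simp add: matrix_scalar_ac scalar_matrix_assoc[symmetric] matrix_inv_mult(1))

lemma pd_invertible:
  assumes "pd_mat (P::real^'n^'n)"
  shows "invertible P"
proof -
  have "inj ((*v) P)"
  proof (rule injI)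
    fix x y assume "P *v x = P *v y"
    then have "(x - y) \<bullet> (P *v (x - y)) = 0" by (simp add: matrix_vector_mult_diff_distrib)
    then show "x = y" using assms unfolding pd_mat_def by (metis eq_iff_diff_eq_0 less_irrefl)
  qed
  then show ?thesis using matrix_left_invertible_injective invertible_left_inverse by blast
qed

lemma pd_matrix_inv:
  assumes P: "pd_mat (P::real^'n^'n)"
  shows "pd_mat (matrix_inv P)"
proof -
  let ?Pi = "matrix_inv P"
  have r: "P ** ?Pi = mat 1" using matrix_inv_mult(1)[OF pd_invertible[OF P]] .
  have "transpose ?Pi = transpose ?Pi ** (P ** ?Pi)" by (simp add: r)
  also have "\<dots> = transpose (P ** ?Pi) ** ?Pi"
    using P by (simp add: matrix_mul_assoc matrix_transpose_mul pd_mat_def)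
  finally have "transpose ?Pi = ?Pi" by (simp add: r)
  moreover have "0 < x \<bullet> (?Pi *v x)" if "x \<noteq> 0" for x
  proof -
    have x: "P *v (?Pi *v x) = x" by (simp add: matrix_vector_mul_assoc r)
    then have "?Pi *v x \<noteq> 0" using that by auto
    then have "0 < (?Pi *v x) \<bullet> (P *v (?Pi *v x))" using P unfolding pd_mat_def by auto
    then show ?thesis by (simp add: x inner_commute)
  qed
  ultimately show ?thesis unfolding pd_mat_def by auto
qed

section \<open>Rank-one decomposition of positive semidefinite matrices\<close>

text \<open>For \<open>B$k$k = 0\<close> the division by zero makes \<open>schur_compl k B = B\<close>, which is harmless:
  then row and column \<open>k\<close> of a positive semidefinite \<open>B\<close> already vanish.\<close>

definition schur_compl :: "'n \<Rightarrow> real^'n^'n \<Rightarrow> real^'n^'n" where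
  "schur_compl k B = B - (1 / B$k$k) *\<^sub>R outer (column k B)"

lemma schur_compl_entry: "schur_compl k B $ i $ j = B$i$j - B$i$k * B$j$k / B$k$k"
  by (simp add: schur_compl_def outer_def column_def)

lemma psd_schur_compl:
  assumes B: "psd_mat B"
  shows "psd_mat (schur_compl k B)"
proof (cases "B$k$k = 0")
  case True
  then show ?thesis using B by (simp add: schur_compl_def)
next
  case False
  let ?d = "B$k$k" and ?b = "column k B" and ?e = "axis k (1::real)"
  have d: "0 < ?d" using False psd_diag_nonneg[OF B, of k] by simp
  have sym: "transpose B = B" using psd_symmetric[OF B] .
  have "transpose (schur_compl k B) = schur_compl k B"
    using symmetric_entry[OF sym] by (simp add: vec_eq_iff transpose_def schur_compl_entry mult.commute)
  moreover have "0 \<le> x \<bullet> (schur_compl k B *v x)" for x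
  proof -
    define c where "c = (?b \<bullet> x) / ?d"
    have Be: "B *v ?e = ?b" by (rule matrix_vector_mult_basis)
    have "0 \<le> (x - c *\<^sub>R ?e) \<bullet> (B *v (x - c *\<^sub>R ?e))"
      using psd_quad_nonneg[OF B] .
    also have "\<dots> = x \<bullet> (B *v x) - 2 * c * (?b \<bullet> x) + c\<^sup>2 * ?d"
      using symmetric_inner_swap[OF sym, of ?e x]
      by (simp add: algebra_simps inner_axis_matrix_axis Be inner_commute power2_eq_square
          inner_axis' column_def)
    also have "\<dots> = x \<bullet> (B *v x) - (?b \<bullet> x)\<^sup>2 / ?d"
      using d by (simp add: c_def field_simps power2_eq_square)
    also have "\<dots> = x \<bullet> (schur_compl k B *v x)"
      by (simp add: schur_compl_def matrix_vector_mult_diff_rdistrib scaleR_matrix_vector_mult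
          inner_diff_right outer_quad_form)
    finally show ?thesis .
  qed
  ultimately show ?thesis unfolding psd_mat_def by simp
qed

lemma schur_compl_row_zero:
  assumes "psd_mat B"
  shows "schur_compl k B $ k $ j = 0"
proof (cases "B$k$k = 0")
  case True
  then show ?thesis using psd_zero_diag_imp_zero_row[OF assms] by (simp add: schur_compl_entry)
next
  case False
  then show ?thesis
    using symmetric_entry[OF psd_symmetric[OF assms], of j k] by (simp add: schur_compl_entry)
qed

text \<open>An \<open>LDL\<^sup>T\<close> decomposition, one pivot of \<open>S\<close> at a time.\<close>

lemma psd_eq_sum_outer_on:
  assumes "finite S" and "psd_mat B" and "\<And>i j. i \<notin> S \<Longrightarrow> B$i$j = 0"
  shows "\<exists>v. B = (\<Sum>i\<in>S. outer (v i))"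
  using assms
proof (induction S arbitrary: B rule: finite_induct)
  case empty
  then show ?case by (simp add: vec_eq_iff)
next
  case (insert k S)
  let ?d = "B$k$k" and ?b = "column k B"
  have "schur_compl k B $ i $ j = 0" if "i \<notin> S" for i j
  proof (cases "i = k")
    case True
    then show ?thesis using schur_compl_row_zero[OF insert.prems(1)] by simp
  next
    case False
    then show ?thesis using that insert.prems(2) by (simp add: schur_compl_entry)
  qed
  then obtain v where v: "schur_compl k B = (\<Sum>i\<in>S. outer (v i))"
    using insert.IH[OF psd_schur_compl[OF insert.prems(1)]] by blast
  define w where "w = v(k := (1 / sqrt ?d) *\<^sub>R ?b)"
  have "outer (w k) = (1 / ?d) *\<^sub>R outer ?b"
    using psd_diag_nonneg[OF insert.prems(1), of k]
    by (simp add: w_def outer_scaleR power_divide)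
  moreover have "(\<Sum>i\<in>S. outer (w i)) = (\<Sum>i\<in>S. outer (v i))"
    using insert.hyps(2) by (intro sum.cong) (auto simp: w_def)
  ultimately have "(\<Sum>i\<in>insert k S. outer (w i)) = (1 / ?d) *\<^sub>R outer ?b + schur_compl k B"
    using insert.hyps by (simp add: v)
  also have "\<dots> = B" by (simp add: schur_compl_def)
  finally show ?case by metis
qed

lemma psd_eq_sum_outer:
  assumes "psd_mat B"
  obtains v :: "'n \<Rightarrow> real^'n" where "B = (\<Sum>i\<in>UNIV. outer (v i))"
  using psd_eq_sum_outer_on[of UNIV B] assms by auto

lemma psd_inner_nonneg:
  fixes A B :: "real^'n^'n"
  assumes "psd_mat A" and "psd_mat B"
  shows "0 \<le> A \<bullet> B"
proof -
  obtain v :: "'n \<Rightarrow> real^'n" where "B = (\<Sum>i\<in>UNIV. outer (v i))" using psd_eq_sum_outer[OF assms(2)] .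
  then show ?thesis
    by (simp add: inner_sum_right inner_outer sum_nonneg psd_quad_nonneg[OF assms(1)])
qed

lemma pd_psd_inner_eq_0D:
  fixes A B :: "real^'n^'n"
  assumes A: "pd_mat A" and B: "psd_mat B" and AB: "A \<bullet> B = 0"
  shows "B = 0"
proof -
  obtain v :: "'n \<Rightarrow> real^'n" where v: "B = (\<Sum>i\<in>UNIV. outer (v i))" using psd_eq_sum_outer[OF B] .
  have nonneg: "0 \<le> v i \<bullet> (A *v v i)" for i
    using psd_quad_nonneg[OF pd_imp_psd[OF A]] .
  have "(\<Sum>i\<in>UNIV. v i \<bullet> (A *v v i)) = 0"
    using AB by (simp add: v inner_sum_right inner_outer)
  then have "v i \<bullet> (A *v v i) = 0" for i
    using sum_nonneg_eq_0_iff[of UNIV "\<lambda>i. v i \<bullet> (A *v v i)"] nonneg by simp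
  then have "v i = 0" for i
    using A unfolding pd_mat_def by (metis less_irrefl)
  then show ?thesis by (simp add: v outer_def vec_eq_iff)
qed

lemma psd_norm_le_trace:
  fixes Q :: "real^'n^'n"
  assumes "psd_mat Q"
  shows "norm Q \<le> trace Q"
proof -
  obtain v :: "'n \<Rightarrow> real^'n" where v: "Q = (\<Sum>i\<in>UNIV. outer (v i))"
    using psd_eq_sum_outer[OF assms] .
  have "norm Q \<le> (\<Sum>i\<in>UNIV. norm (outer (v i)))" unfolding v by (rule norm_sum)
  also have "\<dots> = (\<Sum>i\<in>UNIV. trace (outer (v i)))"
    by (simp only: norm_outer trace_outer)
  also have "\<dots> = trace Q"
    unfolding v by (rule linear_sum[OF linear_trace, symmetric])
  finally show ?thesis .
qed

lemma psd_trace_nonneg: "psd_mat (Q::real^'n^'n) \<Longrightarrow> 0 \<le> trace Q"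
  using psd_norm_le_trace[of Q] norm_ge_zero[of Q] by linarith

lemma pd_trace_pos:
  assumes "pd_mat (P::real^'n^'n)"
  shows "0 < trace P"
proof -
  have "P \<noteq> 0"
    using assms unfolding pd_mat_def by (metis axis_eq_0_iff inner_zero_right matrix_vector_mult_0 
        less_irrefl zero_neq_one)
  then have "0 < norm P" by simp
  then show ?thesis using psd_norm_le_trace[OF pd_imp_psd[OF assms]] by linarith
qed

section \<open>The objective and its affine minorant\<close>

definition precond_obj :: "real^'n^'n \<Rightarrow> real^'n^'n \<Rightarrow> real" where
  "precond_obj X Q = X \<bullet> matrix_inv Q + trace Q"

definition precond_minorant :: "real^'n^'n \<Rightarrow> real^'n^'n \<Rightarrow> real^'n^'n \<Rightarrow> real" where
  "precond_minorant X W Q = X \<bullet> (2 *\<^sub>R W - W ** Q ** W) + trace Q"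

lemma inv_diff_minorant_eq_sandwich:
  assumes Q: "pd_mat (Q::real^'n^'n)"
  shows "matrix_inv Q - (2 *\<^sub>R W - W ** Q ** W) = (matrix_inv Q - W) ** Q ** (matrix_inv Q - W)"
proof -
  let ?Qi = "matrix_inv Q"
  have l: "?Qi ** Q = mat 1" and r: "Q ** ?Qi = mat 1"
    using matrix_inv_mult[OF pd_invertible[OF Q]] by auto
  have "(?Qi - W) ** Q ** (?Qi - W) = (mat 1 - W ** Q) ** (?Qi - W)"
    by (simp add: matrix_diff_rdistrib l)
  also have "\<dots> = ?Qi - W - (W ** (Q ** ?Qi) - W ** Q ** W)"
    by (simp add: matrix_diff_rdistrib matrix_diff_ldistrib matrix_mul_assoc)
  also have "\<dots> = ?Qi - (2 *\<^sub>R W - W ** Q ** W)"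
    by (simp add: r scaleR_2 algebra_simps)
  finally show ?thesis by simp
qed

lemma precond_obj_minus_minorant:
  assumes "pd_mat Q"
  shows "precond_obj X Q - precond_minorant X W Q
    = X \<bullet> ((matrix_inv Q - W) ** Q ** (matrix_inv Q - W))"
  by (simp add: precond_obj_def precond_minorant_def inner_diff_right
      inv_diff_minorant_eq_sandwich[OF assms, symmetric])

lemma symmetric_inv_diff:
  assumes "pd_mat Q" and "transpose W = W"
  shows "transpose (matrix_inv Q - W) = matrix_inv Q - W"
  using pd_matrix_inv[OF assms(1)] assms(2) by (simp add: pd_mat_def vec_eq_iff transpose_def)

lemma precond_minorant_le:
  assumes "psd_mat X" and "pd_mat Q" and "transpose W = W"
  shows "precond_minorant X W Q \<le> precond_obj X Q"
  using precond_obj_minus_minorant[OF assms(2), of X W]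
    psd_inner_nonneg[OF assms(1) psd_sandwich[OF symmetric_inv_diff[OF assms(2,3)] pd_imp_psd[OF assms(2)]]]
  by simp

lemma precond_minorant_inv:
  assumes "pd_mat Q"
  shows "precond_minorant X (matrix_inv Q) Q = precond_obj X Q"
  using precond_obj_minus_minorant[OF assms, of X "matrix_inv Q"] by simp

lemma precond_minorant_eq_objD:
  assumes X: "pd_mat X" and Q: "pd_mat Q" and W: "transpose W = W"
    and eq: "precond_minorant X W Q = precond_obj X Q"
  shows "W = matrix_inv Q"
proof -
  let ?R = "matrix_inv Q - W"
  have R: "transpose ?R = ?R" using symmetric_inv_diff[OF Q W] .
  have "X \<bullet> (?R ** Q ** ?R) = 0" using precond_obj_minus_minorant[OF Q, of X W] eq by simp
  then have RQR: "?R ** Q ** ?R = 0"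
    using pd_psd_inner_eq_0D[OF X psd_sandwich[OF R pd_imp_psd[OF Q]]] by blast
  have "?R *v x = 0 *v x" for x
    using sandwich_quad_form[OF R, of x Q] RQR Q unfolding pd_mat_def by force
  then have "?R = 0" using matrix_eq by blast
  then show ?thesis by simp
qed

lemma precond_minorant_convex_comb:
  assumes "u + v = 1"
  shows "precond_minorant X W (u *\<^sub>R Q1 + v *\<^sub>R Q2)
    = u * precond_minorant X W Q1 + v * precond_minorant X W Q2"
proof -
  have WQW: "W ** (u *\<^sub>R Q1 + v *\<^sub>R Q2) ** W = u *\<^sub>R (W ** Q1 ** W) + v *\<^sub>R (W ** Q2 ** W)"
    by (simp add: matrix_add_ldistrib matrix_add_rdistrib matrix_scalar_ac scalar_matrix_assoc[symmetric])
  have v: "v = 1 - u" using assms by simp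
  show ?thesis
    unfolding precond_minorant_def WQW trace_add trace_scaleR inner_diff_right inner_add_right
    by (simp add: v algebra_simps)
qed

lemma isCont_precond_minorant: "isCont (precond_minorant X W) Q"
proof -
  have "isCont (\<lambda>Q. W ** Q ** W) Q" "isCont trace Q"
    by (intro linear_continuous_at linear_conv_bounded_linear[THEN iffD1] linear_sandwich linear_trace)+
  then show ?thesis unfolding precond_minorant_def by (intro continuous_intros)
qed

lemma precond_obj_nonneg:
  assumes "psd_mat X" and "pd_mat Q"
  shows "0 \<le> X \<bullet> matrix_inv Q" and "0 \<le> trace Q"
  using psd_inner_nonneg[OF assms(1) pd_imp_psd[OF pd_matrix_inv[OF assms(2)]]]
    psd_trace_nonneg[OF pd_imp_psd[OF assms(2)]] by auto

text \<open>Testing the variational bound with the rank-one matrix \<open>W = outer u / (u \<bullet> Q u)\<close>.\<close>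

lemma quad_ratio_le_inner_inv:
  assumes Q: "pd_mat (Q::real^'n^'n)" and X: "psd_mat X" and u: "u \<noteq> 0"
  shows "(u \<bullet> (X *v u)) / (u \<bullet> (Q *v u)) \<le> X \<bullet> matrix_inv Q"
proof -
  define q where "q = u \<bullet> (Q *v u)"
  have q: "0 < q" using Q u unfolding pd_mat_def q_def by auto
  define W where "W = (1 / q) *\<^sub>R outer u"
  have W: "transpose W = W" by (simp add: W_def vec_eq_iff transpose_def outer_def mult.commute)
  have "W ** Q ** W = W"
    using q by (simp add: W_def matrix_scalar_ac scalar_matrix_assoc[symmetric] outer_sandwich
        q_def[symmetric] power2_eq_square)
  then have "precond_minorant X W Q = X \<bullet> W + trace Q"
    by (simp add: precond_minorant_def scaleR_2)
  also have "X \<bullet> W = (u \<bullet> (X *v u)) / q"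
    by (simp add: W_def inner_outer)
  finally show ?thesis
    using precond_minorant_le[OF X Q W] by (simp add: precond_obj_def q_def)
qed

lemma isCont_quad_form: "isCont (\<lambda>A::real^'n^'n. x \<bullet> (A *v x)) A"
  unfolding inner_outer[symmetric] by (intro continuous_intros)

lemma pd_limit_inner_inv_bounded:
  fixes Q :: "nat \<Rightarrow> real^'n^'n"
  assumes X: "pd_mat X" and Q: "\<And>k. pd_mat (Q k)" and bound: "\<And>k. X \<bullet> matrix_inv (Q k) \<le> c"
    and lim: "Q \<longlonglongrightarrow> l"
  shows "pd_mat l"
proof -
  have l: "psd_mat l"
    using closed_sequentially[OF closed_psd _ lim] Q pd_imp_psd by blast
  have "0 < x \<bullet> (l *v x)" if "x \<noteq> 0" for x
  proof -
    have "x \<bullet> (X *v x) \<le> c * (x \<bullet> (Q k *v x))" for k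
    proof -
      have "0 < x \<bullet> (Q k *v x)" using Q that unfolding pd_mat_def by auto
      then show ?thesis
        using quad_ratio_le_inner_inv[OF Q pd_imp_psd[OF X] that, of k] bound[of k]
        by (simp add: divide_le_eq) (meson mult_right_mono less_imp_le order_trans)
    qed
    moreover have "(\<lambda>k. c * (x \<bullet> (Q k *v x))) \<longlonglongrightarrow> c * (x \<bullet> (l *v x))"
      by (intro tendsto_mult_left isCont_tendsto_compose[OF isCont_quad_form lim])
    ultimately have "x \<bullet> (X *v x) \<le> c * (x \<bullet> (l *v x))"
      by (intro LIMSEQ_le_const) auto
    moreover have "0 < x \<bullet> (X *v x)" using X that unfolding pd_mat_def by auto
    ultimately show ?thesis
      using psd_quad_nonneg[OF l, of x] by (metis less_eq_real_def mult_zero_right not_le)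
  qed
  then show ?thesis using l unfolding pd_mat_def psd_mat_def by auto
qed

lemma precond_obj_limit_le:
  fixes Q :: "nat \<Rightarrow> real^'n^'n"
  assumes X: "psd_mat X" and Q: "\<And>k. pd_mat (Q k)" and lim: "Q \<longlonglongrightarrow> l" and l: "pd_mat l"
    and obj: "(\<lambda>k. precond_obj X (Q k)) \<longlonglongrightarrow> m"
  shows "precond_obj X l \<le> m"
proof -
  let ?W = "matrix_inv l"
  have W: "transpose ?W = ?W" using pd_matrix_inv[OF l] unfolding pd_mat_def by simp
  have "(\<lambda>k. precond_minorant X ?W (Q k)) \<longlonglongrightarrow> precond_minorant X ?W l"
    by (rule isCont_tendsto_compose[OF isCont_precond_minorant lim])
  then have "precond_minorant X ?W l \<le> m"
    using obj precond_minorant_le[OF X Q W] by (intro LIMSEQ_le) auto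
  then show ?thesis using precond_minorant_inv[OF l] by simp
qed

section \<open>Existence, uniqueness and trace of the minimiser\<close>

definition is_precond :: "(real^'n^'n) set \<Rightarrow> real^'n^'n \<Rightarrow> real^'n^'n \<Rightarrow> bool" where
  "is_precond H X P \<longleftrightarrow>
     P \<in> H \<and> pd_mat P \<and> (\<forall>Q\<in>H. pd_mat Q \<longrightarrow> precond_obj X P \<le> precond_obj X Q)"

lemma is_precond_exists:
  fixes X :: "real^'n^'n"
  assumes H: "closed H" and Q0: "Q0 \<in> H" "pd_mat Q0" and X: "pd_mat X"
  shows "\<exists>P. is_precond H X P"
proof -
  define F where "F = precond_obj X ` {Q \<in> H. pd_mat Q}"
  have "F \<noteq> {}" using Q0 by (auto simp: F_def)
  moreover have "bdd_below F"
    using precond_obj_nonneg[OF pd_imp_psd[OF X]]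
    by (intro bdd_belowI[of _ 0]) (force simp: F_def precond_obj_def)
  ultimately have "Inf F \<in> closure F" by (rule closure_contains_Inf)
  then obtain y where yF: "\<And>k. y k \<in> F" and y: "y \<longlonglongrightarrow> Inf F"
    unfolding closure_sequential by blast
  have "\<exists>Q. Q \<in> H \<and> pd_mat Q \<and> precond_obj X Q = y k" for k
    using yF[of k] unfolding F_def by auto
  then obtain Q where QH: "\<And>k. Q k \<in> H" and Q: "\<And>k. pd_mat (Q k)"
    and Qy: "\<And>k. precond_obj X (Q k) = y k"
    by metis
  obtain B where "\<And>k. norm (y k) \<le> B"
    using convergent_imp_bounded[OF y] unfolding bounded_iff by auto
  then have B: "y k \<le> B" for k by (simp add: abs_le_iff)
  have inv_le: "X \<bullet> matrix_inv (Q k) \<le> B" and trace_le: "trace (Q k) \<le> B" for k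
    using B[of k] Qy[of k] precond_obj_nonneg[OF pd_imp_psd[OF X] Q[of k]]
    by (auto simp: precond_obj_def)
  have "norm (Q k) \<le> B" for k
    using psd_norm_le_trace[OF pd_imp_psd[OF Q]] trace_le by (rule order_trans)
  then have "bounded (range Q)"
    unfolding bounded_iff by blast
  then obtain l r where r: "strict_mono r" and lim: "(Q \<circ> r) \<longlonglongrightarrow> l"
    using bounded_imp_convergent_subsequence by blast
  have lH: "l \<in> H" using closed_sequentially[OF H _ lim] QH by simp
  have l: "pd_mat l" by (rule pd_limit_inner_inv_bounded[OF X _ _ lim, of B]) (simp_all add: Q inv_le)
  have "(\<lambda>k. precond_obj X ((Q \<circ> r) k)) \<longlonglongrightarrow> Inf F"
    using LIMSEQ_subseq_LIMSEQ[OF y r] by (simp add: Qy o_def)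
  then have "precond_obj X l \<le> Inf F"
    using precond_obj_limit_le[OF pd_imp_psd[OF X] _ lim l] Q by simp
  moreover have "Inf F \<le> precond_obj X Q'" if "Q' \<in> H" "pd_mat Q'" for Q'
    using \<open>bdd_below F\<close> that by (intro cInf_lower) (auto simp: F_def)
  ultimately show ?thesis using lH l unfolding is_precond_def by force
qed

text \<open>Strict convexity of the objective, seen through the minorant at the inverse of the midpoint.\<close>

lemma is_precond_unique:
  fixes X :: "real^'n^'n"
  assumes H: "convex H" and X: "pd_mat X" and P1: "is_precond H X P1" and P2: "is_precond H X P2"
  shows "P1 = P2"
proof -
  have P: "P1 \<in> H" "pd_mat P1" "P2 \<in> H" "pd_mat P2"
    using P1 P2 unfolding is_precond_def by auto
  define Q where "Q = (1/2) *\<^sub>R P1 + (1/2) *\<^sub>R P2"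
  have Q: "Q \<in> H" "pd_mat Q"
    unfolding Q_def using convexD[OF H] pd_convex_comb[OF P(2,4), of "1/2" "1/2"] P by auto
  define W where "W = matrix_inv Q"
  have W: "transpose W = W" using pd_matrix_inv[OF Q(2)] unfolding W_def pd_mat_def by simp
  have "precond_obj X Q = (1/2) * precond_minorant X W P1 + (1/2) * precond_minorant X W P2"
    using precond_minorant_convex_comb[of "1/2" "1/2" X W P1 P2] precond_minorant_inv[OF Q(2)]
    by (simp add: Q_def W_def)
  moreover have "precond_obj X P1 \<le> precond_obj X Q" "precond_obj X P2 \<le> precond_obj X Q"
    using P1 P2 Q unfolding is_precond_def by auto
  moreover have "precond_minorant X W P1 \<le> precond_obj X P1" "precond_minorant X W P2 \<le> precond_obj X P2"
    using precond_minorant_le[OF pd_imp_psd[OF X] _ W] P by auto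
  ultimately have "precond_minorant X W P1 = precond_obj X P1" "precond_minorant X W P2 = precond_obj X P2"
    by linarith+
  then have "W = matrix_inv P1" "W = matrix_inv P2"
    using precond_minorant_eq_objD[OF X _ W] P by auto
  then show ?thesis
    using matrix_inv_matrix_inv pd_invertible P by metis
qed

text \<open>Optimality along the ray \<open>t P\<close>: \<open>a / t + t b\<close> with \<open>a = X \<bullet> P\<inverse>\<close>, \<open>b = trace P\<close>
  is minimal at \<open>t = 1\<close> only if \<open>a = b\<close>; the test point is \<open>t = (a + b) / (2 b)\<close>.\<close>

lemma is_precond_obj_eq_trace:
  assumes cone: "\<And>t P. 0 < t \<Longrightarrow> P \<in> H \<Longrightarrow> t *\<^sub>R P \<in> H"
    and X: "psd_mat X" and P: "is_precond H X P"
  shows "precond_obj X P = 2 * trace P"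
proof -
  have PH: "P \<in> H" and Ppd: "pd_mat P" using P unfolding is_precond_def by auto
  define a where "a = X \<bullet> matrix_inv P"
  define b where "b = trace P"
  have a: "0 \<le> a" unfolding a_def using precond_obj_nonneg[OF X Ppd] by simp
  have b: "0 < b" unfolding b_def using pd_trace_pos[OF Ppd] .
  define t where "t = (a + b) / (2 * b)"
  have t: "0 < t" unfolding t_def using a b by simp
  have "precond_obj X P \<le> precond_obj X (t *\<^sub>R P)"
    using P cone[OF t PH] pd_scaleR[OF Ppd t] unfolding is_precond_def by blast
  then have "a + b \<le> a / t + t * b"
    using matrix_inv_scaleR[OF pd_invertible[OF Ppd]] t
    by (simp add: precond_obj_def trace_scaleR a_def b_def)
  moreover have "a / t = 2 * a * b / (a + b)" and "t * b = (a + b) / 2"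
    unfolding t_def using a b by (simp_all add: field_simps)
  ultimately have "(a + b) / 2 \<le> 2 * a * b / (a + b)" by argo
  then have "(a + b) * (a + b) \<le> 4 * a * b"
    using a b by (simp add: field_simps)
  then have "(a - b)\<^sup>2 \<le> 0" by (simp add: power2_eq_square algebra_simps)
  then have "a = b" by simp
  then show ?thesis by (simp add: precond_obj_def a_def b_def)
qed

section \<open>Well-structured preconditioner sets\<close>

lemma well_structured_psd_Int_subspace:
  assumes "well_structured H"
  obtains K where "subspace K" and "mat 1 \<in> K" and "H = {A. psd_mat A} \<inter> K"
proof -
  obtain K where scale: "\<forall>c A. A \<in> K \<longrightarrow> c *\<^sub>R A \<in> K" and add: "\<forall>A B. A \<in> K \<longrightarrow> B \<in> K \<longrightarrow> A + B \<in> K"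
    and "mat 1 \<in> K" and "H = {A. psd_mat A} \<inter> K"
    using assms unfolding well_structured_def by blast
  moreover have "subspace K"
    unfolding subspace_def using scale add \<open>mat 1 \<in> K\<close> by (metis scaleR_zero_left)
  ultimately show ?thesis using that by blast
qed

lemma well_structured_closed_convex_cone:
  fixes H :: "(real^'n^'n) set"
  assumes "well_structured H"
  shows "closed H" and "convex H" and "mat 1 \<in> H" and "\<And>t P. 0 < t \<Longrightarrow> P \<in> H \<Longrightarrow> t *\<^sub>R P \<in> H"
proof -
  obtain K where K: "subspace K" "mat 1 \<in> K" and HK: "H = {A. psd_mat A} \<inter> K"
    using well_structured_psd_Int_subspace[OF assms] .
  show "closed H" unfolding HK by (intro closed_Int closed_psd closed_subspace K(1))
  show "convex H" unfolding HK by (intro convex_Int convex_psd subspace_imp_convex K(1))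
  show "mat 1 \<in> H" using K(2) unfolding HK psd_mat_def by auto
  show "t *\<^sub>R P \<in> H" if "0 < t" "P \<in> H" for t P
    using that psd_scaleR[of P t] subspace_scale[OF K(1), of P t] unfolding HK by auto
qed

lemma is_precond_precond:
  assumes H: "well_structured H" and X: "pd_mat X"
  shows "is_precond H X (precond H X)"
proof -
  have "pd_mat (mat 1)" by (simp add: pd_mat_def)
  then have "\<exists>!P. is_precond H X P"
    using is_precond_exists[OF well_structured_closed_convex_cone(1,3)[OF H] _ X]
      is_precond_unique[OF well_structured_closed_convex_cone(2)[OF H] X] by blast
  moreover have "precond H X = (THE P. is_precond H X P)"
    unfolding precond_def is_precond_def precond_obj_def frob_inner_eq_inner by meson
  ultimately show ?thesis using theI' by metis
qed

lemma precond_obj_precond_eq_trace: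
  assumes H: "well_structured H" and X: "pd_mat X"
  shows "precond_obj X (precond H X) = 2 * trace (precond H X)"
  using is_precond_obj_eq_trace[OF _ pd_imp_psd[OF X] is_precond_precond[OF H X]]
    well_structured_closed_convex_cone(4)[OF H] by blast

lemma precond_obj_convex_comb:
  assumes "u + v = 1"
  shows "precond_obj (u *\<^sub>R X + v *\<^sub>R Y) Q = u * precond_obj X Q + v * precond_obj Y Q"
proof -
  have v: "v = 1 - u" using assms by simp
  show ?thesis unfolding v by (simp add: precond_obj_def inner_add_left algebra_simps)
qed

theorem lemmaA6:
  fixes H :: "(real^'n^'n) set"
  assumes "well_structured H"
  shows "concave_on {X. pd_mat X} (\<lambda>X. trace (precond H X))"
  unfolding concave_on_iff
proof (intro conjI ballI allI impI)
  show "convex {X :: real^'n^'n. pd_mat X}" by (rule convex_pd)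
next
  fix X Y :: "real^'n^'n" and u v :: real
  assume "X \<in> {X. pd_mat X}" "Y \<in> {X. pd_mat X}" and uv: "0 \<le> u" "0 \<le> v" "u + v = 1"
  then have X: "pd_mat X" and Y: "pd_mat Y" and Z: "pd_mat (u *\<^sub>R X + v *\<^sub>R Y)"
    using pd_convex_comb by auto
  let ?P = "precond H (u *\<^sub>R X + v *\<^sub>R Y)"
  have "2 * (u * trace (precond H X) + v * trace (precond H Y))
      = u * precond_obj X (precond H X) + v * precond_obj Y (precond H Y)"
    by (simp add: precond_obj_precond_eq_trace[OF assms X] precond_obj_precond_eq_trace[OF assms Y])
  also have "\<dots> \<le> u * precond_obj X ?P + v * precond_obj Y ?P"
    using is_precond_precond[OF assms] X Y Z uv unfolding is_precond_def
    by (intro add_mono mult_left_mono) auto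
  also have "\<dots> = precond_obj (u *\<^sub>R X + v *\<^sub>R Y) ?P"
    by (rule precond_obj_convex_comb[OF uv(3), symmetric])
  also have "\<dots> = 2 * trace ?P"
    by (rule precond_obj_precond_eq_trace[OF assms Z])
  finally show "u * trace (precond H X) + v * trace (precond H Y) \<le> trace ?P" by simp
qed

end
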